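(* Let $A$ be a finite set with $q:=|A|\ge 2$ and let $n\ge 2$ be an integer. (a) Unless $q=n=2$, the symmetric group $\mathrm{Sym}(A^n)$ is generated by $n$ instructions. (b) If $q\ge 3$, then the alternating group $\mathrm{Alt}(A^n)$ is generated by $n$ instructions (i.e. there exist $n$ instructions, each an even permutation of $A^n$, which generate $\mathrm{Alt}(A^n)$).
   Context: Elements of $A^n$ are written $x=(x_1,\ldots,x_n)$. Any $f\in\mathrm{Sym}(A^n)$ is written $f(x)=(f_1(x),\ldots,f_n(x))$ with coordinate functions $f_i:A^n\to A$; the $i$-th coordinate function is trivial if $f_i(x)=x_i$ for all $x$. An instruction is a permutation $g$ of $A^n$ with at most one nontrivial coordinate function, i.e. $g(x)=(x_1,\ldots,x_{j-1},g_j(x),x_{j+1},\ldots,x_n)$ for some $j$ (it is said to update register $j$); by convention the identity is also an instruction. *)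

theory Defs
  imports "HOL-Library.FuncSet" "HOL-Combinatorics.Permutations"
begin

definition cube :: "'a set \<Rightarrow> nat \<Rightarrow> (nat \<Rightarrow> 'a) set" where
  "cube A n = PiE {..<n} (\<lambda>_. A)"

definition Sym_set :: "'a set \<Rightarrow> nat \<Rightarrow> ((nat \<Rightarrow> 'a) \<Rightarrow> (nat \<Rightarrow> 'a)) set" where
  "Sym_set A n = {p. p permutes cube A n}"

definition Alt_set :: "'a set \<Rightarrow> nat \<Rightarrow> ((nat \<Rightarrow> 'a) \<Rightarrow> (nat \<Rightarrow> 'a)) set" where
  "Alt_set A n = {p. p permutes cube A n \<and> evenperm p}"

definition instruction :: "'a set \<Rightarrow> nat \<Rightarrow> ((nat \<Rightarrow> 'a) \<Rightarrow> (nat \<Rightarrow> 'a)) \<Rightarrow> bool" where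
  "instruction A n g \<longleftrightarrow> g permutes cube A n \<and>
     (g = id \<or> (\<exists>j<n. \<forall>x\<in>cube A n. \<forall>i<n. i \<noteq> j \<longrightarrow> g x i = x i))"

inductive_set perm_gen :: "('b \<Rightarrow> 'b) set \<Rightarrow> ('b \<Rightarrow> 'b) set" for S where
  gen_id: "id \<in> perm_gen S"
| gen_base: "g \<in> S \<Longrightarrow> g \<in> perm_gen S"
| gen_comp: "f \<in> perm_gen S \<Longrightarrow> g \<in> perm_gen S \<Longrightarrow> f \<circ> g \<in> perm_gen S"
| gen_inv: "f \<in> perm_gen S \<Longrightarrow> inv f \<in> perm_gen S"

end

theory Submission
  imports Defs "HOL-Combinatorics.Cycles"
begin

text \<open>A group \<open>H\<close> of permutations of a finite set \<open>X\<close> that contains every product of two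
  transpositions of \<open>X\<close> contains \<open>Alt(X)\<close>, and equals \<open>Sym(X)\<close> if it has an odd element. The
  set of \<open>Z\<close> whose double transpositions lie in \<open>H\<close> is closed under images by \<open>H\<close> and under
  unions of sets sharing two points; starting from the three points of a 3-cycle in \<open>H\<close>, one
  grows such a \<open>Z\<close> until it is invariant under the generators, and a reachability argument then
  shows \<open>Z = A\<^sup>n\<close>.

  The \<open>n\<close> generating instructions rotate one register cyclically, except on one or two
  exceptional lines. For \<open>q \<ge> 3\<close> the \<open>q\<close>-th powers of two generators have supports meeting in
  a single point, so their commutator is a 3-cycle; for \<open>q = 2\<close> the square of the product of two
  generators is one. The parity of a generator is read off by writing it as a rotation of one
  register, which is even, times transpositions.\<close>

section \<open>Groups containing all double transpositions\<close>


lemma funpow_fixpoint: "f a = a \<Longrightarrow> (f ^^ k) a = a"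
  by (induction k) auto

lemma perm_gen_funpow: "f \<in> perm_gen S \<Longrightarrow> f ^^ k \<in> perm_gen S"
  by (induction k) (auto intro: perm_gen.intros)

lemma perm_gen_conj: "h \<in> perm_gen S \<Longrightarrow> g \<in> perm_gen S \<Longrightarrow> h \<circ> g \<circ> inv h \<in> perm_gen S"
  by (intro perm_gen.gen_comp perm_gen.gen_inv)

lemma perm_gen_permutes:
  assumes "\<forall>s\<in>S. s permutes X" and "h \<in> perm_gen S"
  shows "h permutes X"
  using assms(2)
proof induction
  case (gen_comp f g)
  then show ?case by (metis permutes_compose)
qed (use assms(1) permutes_id permutes_inv in blast)+

lemma evenperm_perm_gen:
  assumes "finite X" and "\<forall>s\<in>S. s permutes X \<and> evenperm s" and "h \<in> perm_gen S"
  shows "evenperm h"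
proof -
  have "permutation g" if "g \<in> perm_gen S" for g
    using perm_gen_permutes[of S X g] assms(1,2) that permutation_permutes by blast
  with assms(3) show ?thesis
    by induction (use assms(2) in \<open>auto simp: evenperm_comp evenperm_inv\<close>)
qed

lemma transpose_conj:
  assumes "bij h" shows "h \<circ> transpose a b \<circ> inv h = transpose (h a) (h b)"
proof -
  have "transpose (h a) (h b) \<circ> h = h \<circ> transpose a b"
    using assms by (simp add: transpose_comp_eq bij_is_inj)
  then show ?thesis using assms by (metis bij_is_surj comp_id o_assoc surj_iff)
qed

definition double_transpositions :: "'b set \<Rightarrow> ('b \<Rightarrow> 'b) set" where
  "double_transpositions Z =
     {transpose a b \<circ> transpose c d | a b c d. a \<in> Z \<and> b \<in> Z \<and> c \<in> Z \<and> d \<in> Z \<and> a \<noteq> b \<and> c \<noteq> d}"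

lemma double_transpositions_subset_iff:
  "double_transpositions Z \<subseteq> H \<longleftrightarrow>
     (\<forall>a\<in>Z. \<forall>b\<in>Z. \<forall>c\<in>Z. \<forall>d\<in>Z. a \<noteq> b \<longrightarrow> c \<noteq> d \<longrightarrow> transpose a b \<circ> transpose c d \<in> H)"
  unfolding double_transpositions_def by blast

lemma double_transpositions_subsetD:
  "double_transpositions Z \<subseteq> H \<Longrightarrow> a \<in> Z \<Longrightarrow> b \<in> Z \<Longrightarrow> c \<in> Z \<Longrightarrow> d \<in> Z \<Longrightarrow>
     a \<noteq> b \<Longrightarrow> c \<noteq> d \<Longrightarrow> transpose a b \<circ> transpose c d \<in> H"
  unfolding double_transpositions_subset_iff by blast

text \<open>Every product of two transpositions is a quotient of two products with a fixed
  transposition \<open>transpose e f\<close>.\<close>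
lemma double_transpositions_subset_pivot:
  assumes "\<And>a b. a \<in> Z \<Longrightarrow> b \<in> Z \<Longrightarrow> a \<noteq> b \<Longrightarrow> transpose a b \<circ> transpose e f \<in> perm_gen S"
  shows "double_transpositions Z \<subseteq> perm_gen S"
  unfolding double_transpositions_subset_iff
proof (intro ballI impI)
  fix a b c d assume "a \<in> Z" "b \<in> Z" "c \<in> Z" "d \<in> Z" "a \<noteq> b" "c \<noteq> d"
  then have "(transpose a b \<circ> transpose e f) \<circ> inv (transpose c d \<circ> transpose e f) \<in> perm_gen S"
    using assms by (blast intro: perm_gen.gen_comp perm_gen.gen_inv)
  moreover have "(transpose a b \<circ> transpose e f) \<circ> inv (transpose c d \<circ> transpose e f) =
      transpose a b \<circ> transpose c d"
    by (simp add: o_inv_distrib fun_eq_iff)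
  ultimately show "transpose a b \<circ> transpose c d \<in> perm_gen S"
    by simp
qed

lemma double_transpositions_image:
  assumes S: "\<forall>s\<in>S. s permutes X" and h: "h \<in> perm_gen S"
    and Z: "double_transpositions Z \<subseteq> perm_gen S"
  shows "double_transpositions (h ` Z) \<subseteq> perm_gen S"
proof
  have bij: "bij h" using perm_gen_permutes[OF S h] permutes_bij by blast
  fix g assume "g \<in> double_transpositions (h ` Z)"
  then obtain a b c d where abcd: "a \<in> Z" "b \<in> Z" "c \<in> Z" "d \<in> Z" "h a \<noteq> h b" "h c \<noteq> h d"
    and g: "g = transpose (h a) (h b) \<circ> transpose (h c) (h d)"
    unfolding double_transpositions_def by blast
  have "h \<circ> (transpose a b \<circ> transpose c d) \<circ> inv h \<in> perm_gen S"
    using double_transpositions_subsetD[OF Z abcd(1-4)] abcd(5,6) h by (blast intro: perm_gen_conj)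
  also have "h \<circ> (transpose a b \<circ> transpose c d) \<circ> inv h =
      (h \<circ> transpose a b \<circ> inv h) \<circ> (h \<circ> transpose c d \<circ> inv h)"
    using bij by (simp add: fun_eq_iff bij_is_inj)
  finally show "g \<in> perm_gen S"
    unfolding g transpose_conj[OF bij] .
qed

lemma double_transpositions_Un:
  assumes Y: "double_transpositions Y \<subseteq> perm_gen S"
    and Y': "double_transpositions Y' \<subseteq> perm_gen S"
    and ef: "e \<in> Y \<inter> Y'" "f \<in> Y \<inter> Y'" "e \<noteq> f"
  shows "double_transpositions (Y \<union> Y') \<subseteq> perm_gen S"
proof (rule double_transpositions_subset_pivot)
  have cross: "transpose a b \<circ> transpose e f \<in> perm_gen S"
    if "a \<in> Y - Y'" "b \<in> Y' - Y" for a b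
  proof -
    have "transpose a b \<circ> transpose e f =
        (transpose a e \<circ> transpose e f) \<circ> (transpose e f \<circ> transpose e b) \<circ> (transpose a e \<circ> transpose e f)"
      using that ef by (auto simp: fun_eq_iff transpose_def)
    moreover have "transpose a e \<circ> transpose e f \<in> perm_gen S"
      using that ef by (intro double_transpositions_subsetD[OF Y]) auto
    moreover have "transpose e f \<circ> transpose e b \<in> perm_gen S"
      using that ef by (intro double_transpositions_subsetD[OF Y']) auto
    ultimately show ?thesis by (metis perm_gen.gen_comp)
  qed
  fix a b assume "a \<in> Y \<union> Y'" "b \<in> Y \<union> Y'" "a \<noteq> b"
  then consider "a \<in> Y" "b \<in> Y" | "a \<in> Y'" "b \<in> Y'" | "a \<in> Y - Y'" "b \<in> Y' - Y" | "b \<in> Y - Y'" "a \<in> Y' - Y"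
    by blast
  then show "transpose a b \<circ> transpose e f \<in> perm_gen S"
  proof cases
    case 4 then show ?thesis using cross[of b a] by (simp add: transpose_commute)
  qed (use ef \<open>a \<noteq> b\<close> cross double_transpositions_subsetD[OF Y] double_transpositions_subsetD[OF Y'] in auto)
qed

lemma double_transpositions_triple:
  assumes "a \<noteq> b" "a \<noteq> c" "b \<noteq> c" and cyc: "transpose a c \<circ> transpose a b \<in> perm_gen S"
  shows "double_transpositions {a, b, c} \<subseteq> perm_gen S"
proof (rule double_transpositions_subset_pivot)
  have "transpose b c \<circ> transpose a b = (transpose a c \<circ> transpose a b) \<circ> (transpose a c \<circ> transpose a b)"
    using assms(1-3) by (auto simp: fun_eq_iff transpose_def)
  then have "transpose b c \<circ> transpose a b \<in> perm_gen S"
    using perm_gen.gen_comp[OF cyc cyc] by simp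
  moreover have "transpose a b \<circ> transpose a b \<in> perm_gen S"
    using perm_gen.gen_id by simp
  ultimately show "transpose x y \<circ> transpose a b \<in> perm_gen S"
    if "x \<in> {a, b, c}" "y \<in> {a, b, c}" "x \<noteq> y" for x y
    using that cyc by (auto simp: transpose_commute)
qed

text \<open>Multiplying by \<open>\<beta> \<circ> \<alpha>\<close> on the right removes the inverses.\<close>
lemma commutator_eq_3cycle:
  assumes "bij \<alpha>" "bij \<beta>" and "\<alpha> p \<noteq> p" "\<beta> p \<noteq> p"
    and disj: "\<And>x. \<alpha> x \<noteq> x \<Longrightarrow> \<beta> x \<noteq> x \<Longrightarrow> x = p"
  shows "\<alpha> \<circ> \<beta> \<circ> inv \<alpha> \<circ> inv \<beta> = transpose p (\<beta> p) \<circ> transpose p (\<alpha> p)"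
proof -
  have inj: "inj \<alpha>" "inj \<beta>" using assms(1,2) bij_is_inj by auto
  have fixed: "\<alpha> (\<beta> p) = \<beta> p" "\<beta> (\<alpha> p) = \<alpha> p"
    using disj assms(3,4) inj by (metis inj_eq)+
  have "\<alpha> (\<beta> x) = transpose p (\<beta> p) (transpose p (\<alpha> p) (\<beta> (\<alpha> x)))" for x
    using fixed disj assms(3,4) inj unfolding transpose_def by (smt (verit) inj_eq)
  then have "\<alpha> \<circ> \<beta> = transpose p (\<beta> p) \<circ> transpose p (\<alpha> p) \<circ> (\<beta> \<circ> \<alpha>)"
    by (simp add: fun_eq_iff)
  moreover have "inv \<alpha> \<circ> inv \<beta> = inv (\<beta> \<circ> \<alpha>)"
    using assms(1,2) by (simp add: o_inv_distrib)
  moreover have "(\<beta> \<circ> \<alpha>) \<circ> inv (\<beta> \<circ> \<alpha>) = id"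
    using assms(1,2) by (meson bij_comp bij_is_surj surj_iff)
  ultimately show ?thesis by (metis comp_id o_assoc)
qed

text \<open>Adjoin \<open>t ` Z\<close> for a \<open>t \<in> T\<close> moving \<open>Z\<close>: it meets \<open>Z\<close> in \<open>t a\<close> and \<open>t b\<close>, so the union
  keeps the property, and \<open>card (X - Z)\<close> decreases.\<close>
lemma double_transpositions_invariant_extension:
  assumes "finite X" and S: "\<forall>s\<in>S. s permutes X" and T: "T \<subseteq> perm_gen S"
    and "Y \<subseteq> X" and "double_transpositions Y \<subseteq> perm_gen S"
    and overlap: "\<forall>t\<in>T. \<exists>a\<in>Y. \<exists>b\<in>Y. a \<noteq> b \<and> t a \<in> Y \<and> t b \<in> Y"
  shows "\<exists>Z. Y \<subseteq> Z \<and> Z \<subseteq> X \<and> double_transpositions Z \<subseteq> perm_gen S \<and> (\<forall>t\<in>T. t ` Z = Z)"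
proof -
  have "\<exists>Z'. Y \<subseteq> Z' \<and> Z' \<subseteq> X \<and> double_transpositions Z' \<subseteq> perm_gen S \<and> (\<forall>t\<in>T. t ` Z' = Z')"
    if "Y \<subseteq> Z" "Z \<subseteq> X" "double_transpositions Z \<subseteq> perm_gen S" for Z
    using that
  proof (induction "card (X - Z)" arbitrary: Z rule: less_induct)
    case (less Z)
    show ?case
    proof (cases "\<forall>t\<in>T. t ` Z = Z")
      case False
      then obtain t where t: "t \<in> T" "t ` Z \<noteq> Z" by blast
      have tX: "t permutes X" using perm_gen_permutes S T t(1) by blast
      then have "t ` Z \<subseteq> X" using less.prems(2) permutes_image by blast
      moreover have "\<not> t ` Z \<subseteq> Z"
        using t(2) card_subset_eq[of Z "t ` Z"] finite_subset[OF less.prems(2) \<open>finite X\<close>]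
          card_image[OF inj_on_subset[OF permutes_inj[OF tX] subset_UNIV]] by auto
      ultimately have smaller: "card (X - (Z \<union> t ` Z)) < card (X - Z)"
        using \<open>finite X\<close> by (intro psubset_card_mono) auto
      obtain a b where ab: "a \<in> Y" "b \<in> Y" "a \<noteq> b" "t a \<in> Y" "t b \<in> Y" using overlap t(1) by blast
      have "double_transpositions (Z \<union> t ` Z) \<subseteq> perm_gen S"
      proof (rule double_transpositions_Un[OF less.prems(3)])
        show "double_transpositions (t ` Z) \<subseteq> perm_gen S"
          using double_transpositions_image[OF S _ less.prems(3)] T t(1) by blast
        show "t a \<in> Z \<inter> t ` Z" "t b \<in> Z \<inter> t ` Z" "t a \<noteq> t b"
          using ab less.prems(1) permutes_inj[OF tX] by (auto simp: inj_eq)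
      qed
      with smaller show ?thesis
        using less.hyps less.prems(1,2) \<open>t ` Z \<subseteq> X\<close> by (metis le_supI le_supI1)
    qed (use less.prems in blast)
  qed
  then show ?thesis using assms(4,5) by blast
qed

lemma perm_gen_parity_cases:
  assumes "finite X" and dt: "double_transpositions X \<subseteq> perm_gen S"
    and x: "x0 \<in> X" "x1 \<in> X" "x0 \<noteq> x1" and "p permutes X"
  shows "if evenperm p then p \<in> perm_gen S else transpose x0 x1 \<circ> p \<in> perm_gen S"
  using \<open>p permutes X\<close> \<open>finite X\<close>
proof (induction rule: permutes_induct)
  case id
  then show ?case by (simp add: perm_gen.gen_id)
next
  case (swap a b p)
  have "permutation p" using swap.hyps(4) \<open>finite X\<close> permutation_permutes by blast
  then have parity: "evenperm (transpose a b \<circ> p) \<longleftrightarrow> \<not> evenperm p"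
    using swap.hyps(3) by (simp add: evenperm_comp evenperm_swap permutation_swap_id)
  show ?case
  proof (cases "evenperm p")
    case True
    have "transpose x0 x1 \<circ> transpose a b \<in> perm_gen S"
      using double_transpositions_subsetD[OF dt] x swap.hyps(1-3) by blast
    then have "(transpose x0 x1 \<circ> transpose a b) \<circ> p \<in> perm_gen S"
      using True swap.IH perm_gen.gen_comp by simp
    then show ?thesis using True parity by (metis o_assoc)
  next
    case False
    have "transpose a b \<circ> transpose x0 x1 \<in> perm_gen S"
      using double_transpositions_subsetD[OF dt] x swap.hyps(1-3) by blast
    then have "(transpose a b \<circ> transpose x0 x1) \<circ> (transpose x0 x1 \<circ> p) \<in> perm_gen S"
      using False swap.IH perm_gen.gen_comp by simp
    then show ?thesis using False parity by (metis comp_id o_assoc transpose_comp_involutory)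
  qed
qed

lemma perm_gen_eq_even_permutations:
  assumes "finite X" and S: "\<forall>s\<in>S. s permutes X \<and> evenperm s"
    and "double_transpositions X \<subseteq> perm_gen S" and "x0 \<in> X" "x1 \<in> X" "x0 \<noteq> x1"
  shows "perm_gen S = {p. p permutes X \<and> evenperm p}"
proof
  show "perm_gen S \<subseteq> {p. p permutes X \<and> evenperm p}"
    using perm_gen_permutes evenperm_perm_gen[OF \<open>finite X\<close> S] S by blast
  show "{p. p permutes X \<and> evenperm p} \<subseteq> perm_gen S"
    using perm_gen_parity_cases[OF assms(1,3-)] by auto
qed

lemma perm_gen_eq_permutations:
  assumes "finite X" and S: "\<forall>s\<in>S. s permutes X" and "double_transpositions X \<subseteq> perm_gen S"
    and h: "h \<in> perm_gen S" "\<not> evenperm h" and x: "x0 \<in> X" "x1 \<in> X" "x0 \<noteq> x1"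
  shows "perm_gen S = {p. p permutes X}"
proof
  show "perm_gen S \<subseteq> {p. p permutes X}" using perm_gen_permutes[OF S] by blast
next
  have hX: "h permutes X" using perm_gen_permutes[OF S h(1)] .
  have "transpose x0 x1 \<circ> h \<in> perm_gen S"
    using perm_gen_parity_cases[OF assms(1,3) x hX] h(2) by simp
  then have t: "transpose x0 x1 \<in> perm_gen S"
    using perm_gen.gen_comp[OF _ perm_gen.gen_inv[OF h(1)]] hX
    by (metis comp_id fun.map_comp permutes_surj surj_iff)
  show "{p. p permutes X} \<subseteq> perm_gen S"
  proof
    fix p assume "p \<in> {p. p permutes X}"
    then have p: "p permutes X" by simp
    show "p \<in> perm_gen S"
    proof (cases "evenperm p")
      case False
      then have "transpose x0 x1 \<circ> (transpose x0 x1 \<circ> p) \<in> perm_gen S"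
        using perm_gen_parity_cases[OF assms(1,3) x p] by (simp add: perm_gen.gen_comp[OF t])
      then show ?thesis by (simp add: o_assoc)
    qed (use perm_gen_parity_cases[OF assms(1,3) x p] in simp)
  qed
qed

section \<open>Register updates on the cube\<close>

locale enum_cube =
  fixes A :: "'a set" and n q :: nat and e :: "nat \<Rightarrow> 'a"
  assumes bij_e: "bij_betw e {..<q} A" and n_ge_2: "2 \<le> n" and q_ge_2: "2 \<le> q"
begin

abbreviation X where "X \<equiv> cube A n"

definition num :: "'a \<Rightarrow> nat" where "num = inv_into {..<q} e"

lemma e_in: "d < q \<Longrightarrow> e d \<in> A"
  using bij_betwE[OF bij_e] by blast

lemma num_e [simp]: "d < q \<Longrightarrow> num (e d) = d"
  unfolding num_def using inv_into_f_f[OF bij_betw_imp_inj_on[OF bij_e]] by simp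

lemma e_num [simp]: "a \<in> A \<Longrightarrow> e (num a) = a"
  unfolding num_def using f_inv_into_f[of a e "{..<q}"] bij_betw_imp_surj_on[OF bij_e] by simp

lemma num_less: "a \<in> A \<Longrightarrow> num a < q"
  unfolding num_def using inv_into_into[of a e "{..<q}"] bij_betw_imp_surj_on[OF bij_e] by simp

lemma e_eq_iff: "d < q \<Longrightarrow> d' < q \<Longrightarrow> e d = e d' \<longleftrightarrow> d = d'"
  by (metis num_e)

lemma finite_X: "finite X"
  unfolding cube_def using bij_betw_finite bij_e by (auto intro: finite_PiE)

lemma cube_iff: "x \<in> X \<longleftrightarrow> (\<forall>k<n. x k \<in> A) \<and> (\<forall>k. \<not> k < n \<longrightarrow> x k = undefined)"
  unfolding cube_def PiE_def extensional_def by auto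

lemma cube_coord: "x \<in> X \<Longrightarrow> k < n \<Longrightarrow> x k \<in> A"
  unfolding cube_iff by auto

lemma cube_upd: "x \<in> X \<Longrightarrow> j < n \<Longrightarrow> a \<in> A \<Longrightarrow> x(j := a) \<in> X"
  unfolding cube_iff by auto

lemma cube_eqI: "x \<in> X \<Longrightarrow> y \<in> X \<Longrightarrow> (\<And>k. k < n \<Longrightarrow> x k = y k) \<Longrightarrow> x = y"
  unfolding cube_iff by (metis ext)

definition lift :: "(nat \<Rightarrow> nat) \<Rightarrow> 'a \<Rightarrow> 'a" where
  "lift \<sigma> a = (if a \<in> A then e (\<sigma> (num a)) else a)"

lemma lift_e [simp]: "d < q \<Longrightarrow> lift \<sigma> (e d) = e (\<sigma> d)"
  unfolding lift_def by (simp add: e_in)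

lemma lift_permutes:
  assumes "bij_betw \<sigma> {..<q} {..<q}"
  shows "lift \<sigma> permutes A"
proof -
  have "bij_betw (e \<circ> \<sigma> \<circ> num) A A"
    using bij_e assms bij_betw_inv_into[OF bij_e]
    by (auto simp: num_def intro: bij_betw_trans)
  moreover have "\<forall>a\<in>A. lift \<sigma> a = (e \<circ> \<sigma> \<circ> num) a"
    by (simp add: lift_def)
  ultimately show ?thesis
    by (intro bij_imp_permutes) (auto simp: lift_def cong: bij_betw_cong)
qed

definition rho :: "'a \<Rightarrow> 'a" where "rho = lift (\<lambda>d. (d + 1) mod q)"

lemma rho_e: "d < q \<Longrightarrow> rho (e d) = e ((d + 1) mod q)"
  by (simp add: rho_def)

lemma rho_permutes: "rho permutes A"
  unfolding rho_def
proof (rule lift_permutes, rule bij_betw_byWitness[where f' = "\<lambda>d. (d + (q - 1)) mod q"])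
  have "d + 1 + (q - 1) = d + q" "d + (q - 1) + 1 = d + q" for d
    using q_ge_2 by simp_all
  then show "\<forall>d\<in>{..<q}. ((d + 1) mod q + (q - 1)) mod q = d"
    "\<forall>d\<in>{..<q}. ((d + (q - 1)) mod q + 1) mod q = d"
    by (metis lessThan_iff mod_add_left_eq mod_add_self2 mod_less)+
qed (use q_ge_2 in auto)

lemma rho_funpow: "a \<in> A \<Longrightarrow> (rho ^^ k) a = e ((num a + k) mod q)"
proof (induction k)
  case (Suc k)
  then show ?case
    using rho_e[of "(num a + k) mod q"] q_ge_2 by (simp add: mod_Suc_eq)
qed (simp add: num_less)

lemma rho_funpow_q: "a \<in> A \<Longrightarrow> (rho ^^ q) a = a"
  by (simp add: rho_funpow num_less)

definition a0 where "a0 = e 0"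
definition a1 where "a1 = e 1"

lemma a0_in: "a0 \<in> A" and a1_in: "a1 \<in> A" and a0_ne_a1: "a0 \<noteq> a1"
  unfolding a0_def a1_def using e_in e_eq_iff q_ge_2 by auto

lemma rho_a0: "rho a0 = a1"
  unfolding a0_def a1_def using rho_e[of 0] q_ge_2 by simp

definition origin :: "nat \<Rightarrow> 'a" where "origin = (\<lambda>k. if k < n then a0 else undefined)"
definition unit :: "nat \<Rightarrow> nat \<Rightarrow> 'a" where "unit j = origin(j := a1)"

lemma origin_in: "origin \<in> X"
  unfolding cube_iff origin_def using a0_in a1_in by auto

lemma unit_in: "j < n \<Longrightarrow> unit j \<in> X"
  unfolding unit_def using cube_upd[OF origin_in] a0_in a1_in by blast

lemma unit_ne_origin:
  assumes "j < n" shows "unit j \<noteq> origin"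
proof
  assume "unit j = origin"
  then have "unit j j = origin j" by simp
  with assms a0_ne_a1 show False by (simp add: unit_def origin_def)
qed

lemma unit_ne_unit:
  assumes "i < n" "i \<noteq> j" shows "unit i \<noteq> unit j"
proof
  assume "unit i = unit j"
  then have "unit i i = unit j i" by simp
  with assms a0_ne_a1 show False by (simp add: unit_def origin_def)
qed

definition ones :: "nat \<Rightarrow> 'a" where "ones = (\<lambda>k. if k < n then a1 else undefined)"

lemma ones_in: "ones \<in> X"
  unfolding cube_iff ones_def using a1_in by auto

text \<open>Every instruction updating register \<open>j\<close> has the form \<open>reg_update j P\<close>, where \<open>P x\<close> is a
  permutation of \<open>A\<close> depending only on the registers other than \<open>j\<close>.\<close>
definition reg_update :: "nat \<Rightarrow> ((nat \<Rightarrow> 'a) \<Rightarrow> 'a \<Rightarrow> 'a) \<Rightarrow> (nat \<Rightarrow> 'a) \<Rightarrow> nat \<Rightarrow> 'a" where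
  "reg_update j P x = (if x \<in> X then x(j := P x (x j)) else x)"

definition update_rule :: "nat \<Rightarrow> ((nat \<Rightarrow> 'a) \<Rightarrow> 'a \<Rightarrow> 'a) \<Rightarrow> bool" where
  "update_rule j P \<longleftrightarrow> (\<forall>x\<in>X. \<forall>a\<in>A. P (x(j := a)) = P x) \<and> (\<forall>x\<in>X. P x permutes A)"

lemma update_rule_const: "\<sigma> permutes A \<Longrightarrow> update_rule j (\<lambda>_. \<sigma>)"
  unfolding update_rule_def by simp

lemma update_ruleD:
  assumes "update_rule j P" "x \<in> X"
  shows "a \<in> A \<Longrightarrow> P (x(j := a)) = P x" and "P x permutes A"
  using assms unfolding update_rule_def by auto

lemma reg_update_apply: "x \<in> X \<Longrightarrow> reg_update j P x = x(j := P x (x j))"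
  by (simp add: reg_update_def)

lemma reg_update_outside: "x \<notin> X \<Longrightarrow> reg_update j P x = x"
  by (simp add: reg_update_def)

lemma reg_update_in:
  "update_rule j P \<Longrightarrow> j < n \<Longrightarrow> x \<in> X \<Longrightarrow> reg_update j P x \<in> X"
  by (simp add: reg_update_apply cube_upd cube_coord update_ruleD permutes_in_image)

lemma funpow_reg_update:
  assumes P: "update_rule j P" and j: "j < n" and x: "x \<in> X"
  shows "(reg_update j P ^^ k) x = x(j := (P x ^^ k) (x j))"
proof (induction k)
  case (Suc k)
  have "(P x ^^ k) (x j) \<in> A"
    using permutes_in_funpow_image[OF update_ruleD(2)[OF P x] cube_coord[OF x j]] .
  then have y: "x(j := (P x ^^ k) (x j)) \<in> X" "P (x(j := (P x ^^ k) (x j))) = P x"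
    using cube_upd[OF x j] update_ruleD(1)[OF P x] by auto
  have "(reg_update j P ^^ Suc k) x = reg_update j P (x(j := (P x ^^ k) (x j)))"
    by (simp only: funpow.simps(2) o_apply Suc.IH)
  also have "\<dots> = x(j := (P x ^^ Suc k) (x j))"
    using y by (simp add: reg_update_apply)
  finally show ?case .
qed simp

lemma reg_update_comp:
  assumes Q: "update_rule j Q" and j: "j < n" and P: "\<And>x a. x \<in> X \<Longrightarrow> a \<in> A \<Longrightarrow> P (x(j := a)) = P x"
  shows "reg_update j P \<circ> reg_update j Q = reg_update j (\<lambda>x. P x \<circ> Q x)"
proof
  fix x show "(reg_update j P \<circ> reg_update j Q) x = reg_update j (\<lambda>x. P x \<circ> Q x) x"
  proof (cases "x \<in> X")
    case True
    have "Q x (x j) \<in> A"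
      using update_ruleD(2)[OF Q True] cube_coord[OF True j] by (simp add: permutes_in_image)
    then show ?thesis
      using True cube_upd[OF True j] by (simp add: reg_update_apply P)
  qed (simp add: reg_update_outside)
qed

lemma reg_update_permutes:
  assumes P: "update_rule j P" and j: "j < n"
  shows "reg_update j P permutes X"
proof (rule bij_imp_permutes)
  have Q: "update_rule j (\<lambda>x. inv (P x))"
    using P unfolding update_rule_def by (auto intro: permutes_inv)
  have "reg_update j (\<lambda>x. inv (P x)) \<circ> reg_update j P = reg_update j (\<lambda>x. inv (P x) \<circ> P x)"
    "reg_update j P \<circ> reg_update j (\<lambda>x. inv (P x)) = reg_update j (\<lambda>x. P x \<circ> inv (P x))"
    using reg_update_comp[OF P j] reg_update_comp[OF Q j] update_ruleD[OF P] update_ruleD[OF Q] by auto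
  moreover have "reg_update j (\<lambda>x. inv (P x) \<circ> P x) = id" "reg_update j (\<lambda>x. P x \<circ> inv (P x)) = id"
    using permutes_inverses[OF update_ruleD(2)[OF P]] by (auto simp: reg_update_def fun_eq_iff)
  ultimately show "bij_betw (reg_update j P) X X"
    using reg_update_in[OF P j] reg_update_in[OF Q j]
    by (intro bij_betw_byWitness[where f' = "reg_update j (\<lambda>x. inv (P x))"]) (auto simp: fun_eq_iff)
qed (rule reg_update_outside)

lemma reg_update_instruction:
  "update_rule j P \<Longrightarrow> j < n \<Longrightarrow> instruction A n (reg_update j P)"
  unfolding instruction_def using reg_update_permutes by (auto simp: reg_update_def)

lemma reg_update_cong:
  "(\<And>x. x \<in> X \<Longrightarrow> P x (x j) = P' x (x j)) \<Longrightarrow> reg_update j P = reg_update j P'"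
  by (auto simp: reg_update_def fun_eq_iff)

lemma transpose_eq_reg_update:
  assumes u: "u \<in> X" and j: "j < n" and ab: "a \<in> A" "b \<in> A"
  shows "transpose (u(j := a)) (u(j := b)) =
    reg_update j (\<lambda>x. if \<forall>k<n. k \<noteq> j \<longrightarrow> x k = u k then transpose a b else id)"
proof
  fix x
  have upd_eq: "x = u(j := c) \<longleftrightarrow> (\<forall>k<n. k \<noteq> j \<longrightarrow> x k = u k) \<and> x j = c"
    if "x \<in> X" "c \<in> A" for c
    using that cube_eqI[OF that(1) cube_upd[OF u j that(2)]] by auto
  show "transpose (u(j := a)) (u(j := b)) x =
      reg_update j (\<lambda>x. if \<forall>k<n. k \<noteq> j \<longrightarrow> x k = u k then transpose a b else id) x"
  proof (cases "x \<in> X")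
    case True
    then show ?thesis
      using upd_eq[OF True ab(1)] upd_eq[OF True ab(2)] by (auto simp: reg_update_def transpose_def)
  next
    case False
    then have "x \<noteq> u(j := a)" "x \<noteq> u(j := b)" using cube_upd[OF u j] ab by auto
    with False show ?thesis by (simp add: reg_update_def)
  qed
qed

lemma cube_fill_registers:
  assumes b: "b \<in> Z" "b \<in> X" and y: "y \<in> X" "\<forall>i<m. y i = b i"
    and step: "\<And>z k a. z \<in> Z \<Longrightarrow> z \<in> X \<Longrightarrow> \<forall>i<m. z i = b i \<Longrightarrow> m \<le> k \<Longrightarrow> k < n \<Longrightarrow> a \<in> A \<Longrightarrow>
      z(k := a) \<in> Z"
  shows "y \<in> Z"
proof -
  have "\<forall>y\<in>X. (\<forall>i<m. y i = b i) \<longrightarrow> (\<forall>i. l \<le> i \<longrightarrow> i < n \<longrightarrow> y i = b i) \<longrightarrow> y \<in> Z" for l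
  proof (induction l)
    case 0
    then show ?case using b cube_eqI by blast
  next
    case (Suc l)
    show ?case
    proof (intro ballI impI)
      fix y assume y: "y \<in> X" "\<forall>i<m. y i = b i" "\<forall>i. Suc l \<le> i \<longrightarrow> i < n \<longrightarrow> y i = b i"
      show "y \<in> Z"
      proof (cases "m \<le> l \<and> l < n")
        case True
        then have "y(l := b l) \<in> Z"
          using Suc.IH y cube_upd[OF y(1) _ cube_coord[OF b(2)]] by (simp add: le_Suc_eq)
        then have "(y(l := b l))(l := y l) \<in> Z"
          using y True cube_upd[OF y(1)] cube_coord[OF y(1)] cube_coord[OF b(2)]
          by (intro step[of "y(l := b l)" l "y l"]) auto
        then show ?thesis by simp
      next
        case False
        then have "y l = b l" using y b cube_iff by (metis not_le)
        then have "\<forall>i. l \<le> i \<longrightarrow> i < n \<longrightarrow> y i = b i"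
          using y(3) by (metis Suc_leI le_neq_implies_less)
        then show ?thesis using Suc.IH y by blast
      qed
    qed
  qed
  from this[of n] y show ?thesis by simp
qed

definition rotate_reg :: "nat \<Rightarrow> (nat \<Rightarrow> 'a) \<Rightarrow> nat \<Rightarrow> 'a" where
  "rotate_reg j = reg_update j (\<lambda>_. rho)"

lemma rotate_reg_permutes: "j < n \<Longrightarrow> rotate_reg j permutes X"
  unfolding rotate_reg_def by (rule reg_update_permutes[OF update_rule_const[OF rho_permutes]])

text \<open>For odd \<open>q\<close> the rotation is the square of its \<open>(q + 1) / 2\<close>-th power.\<close>
lemma evenperm_rotate_reg_odd:
  assumes j: "j < n" and "odd q"
  shows "evenperm (rotate_reg j)"
proof -
  define m where "m = (q + 1) div 2"
  have mm: "m + m = q + 1" using \<open>odd q\<close> unfolding m_def by presburger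
  have "(rotate_reg j ^^ (q + 1)) x = rotate_reg j x" for x
  proof (cases "x \<in> X")
    case True
      have "(rho ^^ (q + 1)) (x j) = rho (x j)"
      using rho_funpow_q[OF cube_coord[OF True j]] by (simp add: funpow_swap1)
    then show ?thesis
      using funpow_reg_update[OF update_rule_const[OF rho_permutes] j True]
      by (simp add: rotate_reg_def reg_update_apply True del: funpow.simps)
  next
    case False
    then show ?thesis
      using permutes_not_in[OF permutes_funpow[OF rotate_reg_permutes[OF j]]]
        permutes_not_in[OF rotate_reg_permutes[OF j]] by simp
  qed
  then have "(rotate_reg j ^^ m) \<circ> (rotate_reg j ^^ m) = rotate_reg j"
    by (simp add: fun_eq_iff funpow_add[symmetric] mm del: funpow.simps)
  moreover have "permutation (rotate_reg j ^^ m)"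
    using permutes_funpow[OF rotate_reg_permutes[OF j]] finite_X permutation_permutes by blast
  ultimately show ?thesis by (metis evenperm_comp)
qed

definition swap_pairs :: "'a \<Rightarrow> 'a" where
  "swap_pairs = lift (\<lambda>d. if even d then d + 1 else d - 1)"

lemma
  assumes "even q"
  shows swap_pairs_permutes: "swap_pairs permutes A"
    and num_swap_pairs: "a \<in> A \<Longrightarrow> even (num (swap_pairs a)) \<longleftrightarrow> odd (num a)"
    and swap_pairs_swap_pairs: "a \<in> A \<Longrightarrow> swap_pairs (swap_pairs a) = a"
proof -
  define \<sigma> :: "nat \<Rightarrow> nat" where "\<sigma> d = (if even d then d + 1 else d - 1)" for d
  have \<sigma>_less: "\<sigma> d < q" if "d < q" for d
    using that \<open>even q\<close> unfolding \<sigma>_def by presburger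
  have \<sigma>_\<sigma>: "\<sigma> (\<sigma> d) = d" and even_\<sigma>: "even (\<sigma> d) \<longleftrightarrow> odd d" for d
    unfolding \<sigma>_def by presburger+
  show "swap_pairs permutes A"
    unfolding swap_pairs_def \<sigma>_def[symmetric]
    by (rule lift_permutes, rule bij_betw_byWitness[where f' = \<sigma>]) (use \<sigma>_less \<sigma>_\<sigma> in auto)
  show "even (num (swap_pairs a)) \<longleftrightarrow> odd (num a)" "swap_pairs (swap_pairs a) = a" if "a \<in> A"
    using that \<sigma>_less[OF num_less[OF that]] \<sigma>_\<sigma> even_\<sigma>
    by (auto simp: swap_pairs_def \<sigma>_def[symmetric] lift_def e_in)
qed

text \<open>For even \<open>q\<close>, rotate register \<open>j\<close> separately on the points where another register \<open>k\<close>
  holds an even resp. odd letter; the two halves are conjugate under \<open>swap_pairs\<close> in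
  register \<open>k\<close>, hence of equal parity.\<close>
lemma evenperm_rotate_reg_even:
  assumes j: "j < n" and "even q"
  shows "evenperm (rotate_reg j)"
proof -
  define k :: nat where "k = (if j = 0 then 1 else 0)"
  have k: "k < n" "k \<noteq> j" using n_ge_2 unfolding k_def by auto
  define rot_if where "rot_if b x = (if even (num (x k)) = b then rho else id)" for b x
  have rule: "update_rule j (rot_if b)" for b
    unfolding update_rule_def rot_if_def using k rho_permutes by auto
  define h where "h = reg_update k (\<lambda>_. swap_pairs)"
  have h: "h permutes X" "\<And>x. x \<in> X \<Longrightarrow> h x = x(k := swap_pairs (x k))"
    unfolding h_def using reg_update_permutes[OF update_rule_const[OF swap_pairs_permutes] k(1)] \<open>even q\<close>
    by (simp_all add: reg_update_apply)
  have s: "reg_update j (rot_if b) permutes X" for b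
    by (rule reg_update_permutes[OF rule j])
  have conj: "h \<circ> reg_update j (rot_if True) \<circ> h = reg_update j (rot_if False)"
  proof
    fix x show "(h \<circ> reg_update j (rot_if True) \<circ> h) x = reg_update j (rot_if False) x"
    proof (cases "x \<in> X")
      case True
      have xk: "x k \<in> A" using cube_coord[OF True k(1)] .
      define y where "y = x(k := swap_pairs (x k))"
      have y: "y \<in> X" "reg_update j (rot_if True) y \<in> X"
        unfolding y_def using cube_upd[OF True k(1)] xk permutes_in_image[OF swap_pairs_permutes]
          permutes_in_image[OF s] \<open>even q\<close> by auto
      show ?thesis
        using True h(2) y xk k \<open>even q\<close>
        by (simp add: y_def[symmetric] reg_update_apply)
          (simp add: y_def rot_if_def num_swap_pairs swap_pairs_swap_pairs fun_upd_twist)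
    qed (simp add: reg_update_outside permutes_not_in[OF h(1)])
  qed
  have split: "reg_update j (rot_if True) \<circ> reg_update j (rot_if False) = rotate_reg j"
    unfolding rotate_reg_def
    by (subst reg_update_comp[OF rule j]) (auto simp: rot_if_def k intro: reg_update_cong)
  have perm: "permutation h" "permutation (reg_update j (rot_if b))" for b
    using h(1) s finite_X permutation_permutes by blast+
  have "evenperm (reg_update j (rot_if False)) = evenperm (reg_update j (rot_if True))"
    using conj[symmetric] perm by (auto simp: evenperm_comp permutation_compose)
  then show ?thesis
    using split perm by (metis evenperm_comp)
qed

lemma evenperm_rotate_reg: "j < n \<Longrightarrow> evenperm (rotate_reg j)"
  using evenperm_rotate_reg_even evenperm_rotate_reg_odd by blast

end

section \<open>Generators for alphabets of size at least three\<close>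

text \<open>Register \<open>j\<close> is rotated by \<open>rho\<close>, except on the axis through the origin, where a
  \<open>(q - 1)\<close>-cycle fixing \<open>aL\<close> is used, and on one special line, where a \<open>(q - 1)\<close>-cycle fixing
  \<open>special_fix j\<close> is used. The \<open>q\<close>-th power of such a generator is the identity off these two
  lines, so the supports of two of these powers meet only at the origin. The flag \<open>alt\<close> adds
  the special line for register \<open>0\<close>; it decides whether the generator of register \<open>0\<close> is even.\<close>
locale gens_q_ge_3 = enum_cube +
  fixes alt :: bool
  assumes q_ge_3: "3 \<le> q"
begin

definition aP where "aP = e (q - 2)"
definition aL where "aL = e (q - 1)"

lemma letters_in: "a0 \<in> A" "a1 \<in> A" "aP \<in> A" "aL \<in> A"
  unfolding aP_def aL_def using a0_in a1_in e_in q_ge_3 by auto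

lemma letters_distinct: "a0 \<noteq> a1" "a0 \<noteq> aL" "a1 \<noteq> aL" "a0 \<noteq> aP" "aP \<noteq> aL"
  unfolding a0_def a1_def aP_def aL_def using e_eq_iff q_ge_3 by auto

lemma num_less_aL:
  assumes "a \<in> A" "a \<noteq> aL" shows "num a < q - 1"
proof -
  have "num a \<noteq> q - 1" using assms by (metis aL_def e_num)
  then show ?thesis using num_less[OF assms(1)] by linarith
qed

lemma rho_aL: "rho aL = a0"
  unfolding aL_def a0_def using rho_e[of "q - 1"] q_ge_3 by simp

definition kappa :: "'a \<Rightarrow> 'a" where "kappa = rho \<circ> transpose aP aL"
definition special_transp :: "nat \<Rightarrow> 'a \<Rightarrow> 'a" where
  "special_transp j = (if j = 0 then transpose aL a0 else transpose a0 a1)"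
definition special_cycle :: "nat \<Rightarrow> 'a \<Rightarrow> 'a" where "special_cycle j = rho \<circ> special_transp j"
definition special_fix :: "nat \<Rightarrow> 'a" where "special_fix j = (if j = 0 then a0 else a1)"

lemma kappa_permutes: "kappa permutes A"
  unfolding kappa_def by (intro permutes_compose permutes_swap_id letters_in rho_permutes)

lemma special_transp_permutes: "special_transp j permutes A"
  unfolding special_transp_def by (simp add: permutes_swap_id letters_in)

lemma special_cycle_permutes: "special_cycle j permutes A"
  unfolding special_cycle_def by (intro permutes_compose special_transp_permutes rho_permutes)

lemma kappa_e: "d < q - 1 \<Longrightarrow> kappa (e d) = e ((d + 1) mod (q - 1))"
proof (cases "d = q - 2")
  case True
  then show ?thesis
    using rho_aL q_ge_3 by (simp add: kappa_def aP_def a0_def Suc_diff_Suc numeral_2_eq_2)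
next
  case False
  assume d: "d < q - 1"
  then have "e d \<noteq> aP" "e d \<noteq> aL"
    unfolding aP_def aL_def using False e_eq_iff[of d] q_ge_3 by auto
  then show ?thesis
    using d False rho_e[of d] by (simp add: kappa_def)
qed

lemma kappa_aL: "kappa aL = aL"
  using rho_e[of "q - 2"] q_ge_3 by (simp add: kappa_def aP_def aL_def Suc_diff_Suc numeral_2_eq_2)

lemma kappa_a0: "kappa a0 = a1"
proof -
  have "1 mod (q - 1) = 1" using q_ge_3 by simp
  then show ?thesis using kappa_e[of 0] q_ge_3 by (simp add: a0_def a1_def)
qed

lemma funpow_kappa: "d < q - 1 \<Longrightarrow> (kappa ^^ k) (e d) = e ((d + k) mod (q - 1))"
proof (induction k)
  case (Suc k)
  then show ?case
    using kappa_e[of "(d + k) mod (q - 1)"] q_ge_3 by (simp add: mod_Suc_eq)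
qed simp

lemma funpow_kappa_q: "a \<in> A \<Longrightarrow> (kappa ^^ q) a = kappa a"
proof (cases "a = aL")
  case False
  assume a: "a \<in> A"
  then have d: "num a < q - 1" using num_less_aL False by blast
  have "num a + q = (num a + 1) + (q - 1)" using q_ge_3 by simp
  then show ?thesis
    using funpow_kappa[OF d, of q] kappa_e[OF d] a by (simp only: e_num mod_add_self2)
qed (simp add: kappa_aL funpow_fixpoint)

lemma special_cycle_fix: "special_cycle j (special_fix j) = special_fix j"
  unfolding special_cycle_def special_transp_def special_fix_def using rho_aL rho_a0 by simp

lemma special_cycle_aL: "j \<noteq> 0 \<Longrightarrow> special_cycle j aL = a0"
  unfolding special_cycle_def special_transp_def using rho_aL letters_distinct by simp

lemma funpow_special_cycle_0: "k \<le> q - 2 \<Longrightarrow> (special_cycle 0 ^^ k) a1 = e (k + 1)"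
proof (induction k)
  case (Suc k)
  then have "e (k + 1) \<noteq> aL" "e (k + 1) \<noteq> a0"
    unfolding aL_def a0_def using e_eq_iff[of "k + 1"] q_ge_3 by auto
  then show ?case
    using Suc rho_e[of "k + 1"] by (simp add: special_cycle_def special_transp_def)
qed (simp add: a1_def)

definition on_axis :: "nat \<Rightarrow> (nat \<Rightarrow> 'a) \<Rightarrow> bool" where
  "on_axis j x \<longleftrightarrow> (\<forall>k<n. k \<noteq> j \<longrightarrow> x k = a0)"

definition special :: "nat \<Rightarrow> (nat \<Rightarrow> 'a) \<Rightarrow> bool" where
  "special j x \<longleftrightarrow>
    (if j = 0 then alt \<and> (\<forall>k<n. k \<noteq> 0 \<longrightarrow> x k = a1)
     else x 0 = aL \<and> (\<forall>k<n. k \<noteq> 0 \<and> k \<noteq> j \<longrightarrow> x k = a1))"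

definition gen_rule :: "nat \<Rightarrow> (nat \<Rightarrow> 'a) \<Rightarrow> 'a \<Rightarrow> 'a" where
  "gen_rule j x = (if on_axis j x then kappa else if special j x then special_cycle j else rho)"

definition gen :: "nat \<Rightarrow> (nat \<Rightarrow> 'a) \<Rightarrow> nat \<Rightarrow> 'a" where
  "gen j = reg_update j (gen_rule j)"

definition gen_pow :: "nat \<Rightarrow> (nat \<Rightarrow> 'a) \<Rightarrow> nat \<Rightarrow> 'a" where
  "gen_pow j = gen j ^^ q"

lemma on_axis_upd [simp]: "on_axis j (x(j := a)) = on_axis j x"
  unfolding on_axis_def by auto

lemma special_upd [simp]: "special j (x(j := a)) = special j x"
  unfolding special_def by auto

lemma not_on_axis_and_special: "on_axis j x \<Longrightarrow> special j x \<Longrightarrow> False"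
proof (cases "j = 0")
  case True
  assume "on_axis j x" "special j x"
  moreover have "1 < n" using n_ge_2 by simp
  ultimately have "x 1 = a0" "x 1 = a1" using True unfolding on_axis_def special_def by simp_all
  then show False using letters_distinct by simp
next
  case False
  assume "on_axis j x" "special j x"
  moreover have "0 < n" using n_ge_2 by simp
  ultimately have "x 0 = a0" "x 0 = aL" using False unfolding on_axis_def special_def by simp_all
  then show False using letters_distinct by simp
qed

lemma on_axis_origin: "on_axis j origin"
  unfolding on_axis_def origin_def by simp

lemma update_rule_gen: "update_rule j (gen_rule j)"
  unfolding update_rule_def gen_rule_def
  using kappa_permutes special_cycle_permutes rho_permutes by simp

lemma gen_permutes: "j < n \<Longrightarrow> gen j permutes X"
  unfolding gen_def by (rule reg_update_permutes[OF update_rule_gen])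

lemma gen_instruction: "j < n \<Longrightarrow> instruction A n (gen j)"
  unfolding gen_def by (rule reg_update_instruction[OF update_rule_gen])

lemma gen_apply: "x \<in> X \<Longrightarrow> gen j x = x(j := gen_rule j x (x j))"
  by (simp add: gen_def reg_update_apply)

lemma funpow_gen: "j < n \<Longrightarrow> x \<in> X \<Longrightarrow> (gen j ^^ k) x = x(j := (gen_rule j x ^^ k) (x j))"
  unfolding gen_def by (rule funpow_reg_update[OF update_rule_gen])

lemma gen_origin: "j < n \<Longrightarrow> gen j origin = unit j"
  using gen_apply[OF origin_in] on_axis_origin kappa_a0
  by (simp add: gen_rule_def unit_def origin_def)

lemma gen_pow_on_axis: "j < n \<Longrightarrow> x \<in> X \<Longrightarrow> on_axis j x \<Longrightarrow> gen_pow j x = gen j x"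
  using funpow_gen gen_apply funpow_kappa_q cube_coord
  by (simp add: gen_pow_def gen_rule_def)

lemma gen_pow_origin: "j < n \<Longrightarrow> gen_pow j origin = unit j"
  using gen_pow_on_axis[OF _ origin_in on_axis_origin] gen_origin by simp

lemma gen_pow_permutes: "j < n \<Longrightarrow> gen_pow j permutes X"
  unfolding gen_pow_def by (rule permutes_funpow[OF gen_permutes])

lemma gen_pow_support:
  assumes j: "j < n" and moved: "gen_pow j x \<noteq> x"
  shows "x \<in> X \<and> (on_axis j x \<and> x j \<noteq> aL \<or> special j x \<and> x j \<noteq> special_fix j)"
proof -
  have x: "x \<in> X"
    using moved permutes_not_in[OF gen_pow_permutes[OF j]] by blast
  have "(gen_rule j x ^^ q) (x j) \<noteq> x j"
    using moved funpow_gen[OF j x] by (auto simp: gen_pow_def)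
  then show ?thesis
    using x rho_funpow_q[OF cube_coord[OF x j]] funpow_fixpoint[of kappa, OF kappa_aL]
      funpow_fixpoint[of "special_cycle j", OF special_cycle_fix]
    by (auto simp: gen_rule_def split: if_splits)
qed

lemma axis_special_moved_disjoint:
  assumes ij: "i < n" "j < n" "i \<noteq> j"
    and "on_axis i x" "x i \<noteq> aL" "special j x" "x j \<noteq> special_fix j"
  shows False
  using assms n_ge_2 letters_distinct unfolding on_axis_def special_def special_fix_def
  by (cases "j = 0"; cases "i = 0") auto

lemma special_moved_disjoint:
  assumes ij: "i < n" "j < n" "i \<noteq> j"
    and "special i x" "x i \<noteq> special_fix i" "special j x" "x j \<noteq> special_fix j"
  shows False
  using assms unfolding special_def special_fix_def
  by (cases "j = 0"; cases "i = 0") auto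

lemma gen_pow_supports_meet_at_origin:
  assumes ij: "i < n" "j < n" "i \<noteq> j" and "gen_pow i x \<noteq> x" "gen_pow j x \<noteq> x"
  shows "x = origin"
proof -
  have "x \<in> X" and i: "on_axis i x \<and> x i \<noteq> aL \<or> special i x \<and> x i \<noteq> special_fix i"
    and j: "on_axis j x \<and> x j \<noteq> aL \<or> special j x \<and> x j \<noteq> special_fix j"
    using gen_pow_support assms by blast+
  then have "on_axis i x" "on_axis j x"
    using axis_special_moved_disjoint[OF ij] axis_special_moved_disjoint[of j i] special_moved_disjoint[OF ij] ij
    by blast+
  then show ?thesis
    using ij by (intro cube_eqI[OF \<open>x \<in> X\<close> origin_in]) (auto simp: on_axis_def origin_def)
qed

abbreviation H where "H \<equiv> perm_gen (gen ` {..<n})"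

lemma gens_permute: "\<forall>s\<in>gen ` {..<n}. s permutes X"
  using gen_permutes by blast

lemma gen_pow_in_H: "j < n \<Longrightarrow> gen_pow j \<in> H"
  unfolding gen_pow_def by (intro perm_gen_funpow perm_gen.gen_base) simp

lemma gen_pow_unit:
  assumes "i < n" "j < n" "i \<noteq> j" shows "gen_pow j (unit i) = unit i"
proof (rule ccontr)
  have "gen_pow i (unit i) \<noteq> gen_pow i origin"
    using unit_ne_origin[OF assms(1)] permutes_inj[OF gen_pow_permutes[OF assms(1)]] by (metis inj_eq)
  then have "gen_pow i (unit i) \<noteq> unit i"
    using gen_pow_origin[OF assms(1)] by simp
  moreover assume "gen_pow j (unit i) \<noteq> unit i"
  ultimately show False
    using gen_pow_supports_meet_at_origin[OF assms] unit_ne_origin[OF assms(1)] by blast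
qed

lemma double_transpositions_origin_units: "double_transpositions {origin, unit 0, unit 1} \<subseteq> H"
proof (rule double_transpositions_triple)
  have n: "0 < n" "1 < n" using n_ge_2 by auto
  have "gen_pow 0 \<circ> gen_pow 1 \<circ> inv (gen_pow 0) \<circ> inv (gen_pow 1) =
      transpose origin (gen_pow 1 origin) \<circ> transpose origin (gen_pow 0 origin)"
    using n gen_pow_supports_meet_at_origin[of 0 1] gen_pow_origin unit_ne_origin
      permutes_bij[OF gen_pow_permutes] by (intro commutator_eq_3cycle) auto
  moreover have "gen_pow 0 \<circ> gen_pow 1 \<circ> inv (gen_pow 0) \<circ> inv (gen_pow 1) \<in> H"
    using gen_pow_in_H n by (meson perm_gen.gen_comp perm_gen.gen_inv)
  ultimately show "transpose origin (unit 1) \<circ> transpose origin (unit 0) \<in> H"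
    using gen_pow_origin n by simp
  show "origin \<noteq> unit 0" "origin \<noteq> unit 1"
    using unit_ne_origin n by metis+
  show "unit 0 \<noteq> unit 1"
    using n by (intro unit_ne_unit) auto
qed

lemma gen_pow_invariant_extension:
  "\<exists>Z. origin \<in> Z \<and> Z \<subseteq> X \<and> double_transpositions Z \<subseteq> H \<and> (\<forall>j<n. gen_pow j ` Z = Z)"
proof -
  let ?Y = "{origin, unit 0, unit 1}"
  have n: "0 < n" "1 < n" using n_ge_2 by auto
  have overlap: "\<exists>a\<in>?Y. \<exists>b\<in>?Y. a \<noteq> b \<and> gen_pow j a \<in> ?Y \<and> gen_pow j b \<in> ?Y" if j: "j < n" for j
  proof -
    consider "j = 0" | "j = 1" | "j \<noteq> 0" "j \<noteq> 1" by blast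
    then show ?thesis
    proof cases
      case 1
      then show ?thesis
        using gen_pow_origin gen_pow_unit[of 1 0] unit_ne_origin n by (intro bexI[of _ origin] bexI[of _ "unit 1"]) auto
    next
      case 2
      then show ?thesis
        using gen_pow_origin gen_pow_unit[of 0 1] unit_ne_origin n by (intro bexI[of _ origin] bexI[of _ "unit 0"]) auto
    next
      case 3
      then show ?thesis
        using j gen_pow_unit[of 0 j] gen_pow_unit[of 1 j] unit_ne_unit n
        by (intro bexI[of _ "unit 0"] bexI[of _ "unit 1"]) auto
    qed
  qed
  then have ov: "\<forall>t\<in>gen_pow ` {..<n}. \<exists>a\<in>?Y. \<exists>b\<in>?Y. a \<noteq> b \<and> t a \<in> ?Y \<and> t b \<in> ?Y"
    unfolding ball_simps lessThan_iff by blast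
  have sub: "gen_pow ` {..<n} \<subseteq> H" "?Y \<subseteq> X"
    using gen_pow_in_H origin_in unit_in[OF n(1)] unit_in[OF n(2)] by blast+
  obtain Z where "?Y \<subseteq> Z" "Z \<subseteq> X" "double_transpositions Z \<subseteq> H"
    "\<forall>t\<in>gen_pow ` {..<n}. t ` Z = Z"
    using double_transpositions_invariant_extension[OF finite_X gens_permute sub
        double_transpositions_origin_units ov] by (elim exE conjE)
  then show ?thesis by (intro exI[of _ Z]) simp
qed

lemma gen_invariant_extension:
  "\<exists>Z. origin \<in> Z \<and> Z \<subseteq> X \<and> double_transpositions Z \<subseteq> H \<and> (\<forall>j<n. gen j ` Z = Z)"
proof -
  obtain Z1 where Z1: "origin \<in> Z1" "Z1 \<subseteq> X" "double_transpositions Z1 \<subseteq> H"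
    "\<forall>j<n. gen_pow j ` Z1 = Z1"
    using gen_pow_invariant_extension by (elim exE conjE)
  have units: "unit j \<in> Z1" "gen j (unit j) \<in> Z1" if "j < n" for j
  proof -
    show "unit j \<in> Z1"
      using Z1(1,4) gen_pow_origin[OF that] that by (metis image_eqI)
    then show "gen j (unit j) \<in> Z1"
      using gen_pow_on_axis[OF that unit_in[OF that]] Z1(4) on_axis_origin that
      by (metis image_eqI on_axis_upd unit_def)
  qed
  have ov: "\<forall>t\<in>gen ` {..<n}. \<exists>a\<in>Z1. \<exists>b\<in>Z1. a \<noteq> b \<and> t a \<in> Z1 \<and> t b \<in> Z1"
  proof
    fix t assume "t \<in> gen ` {..<n}"
    then obtain j where "j < n" "t = gen j" by blast
    then show "\<exists>a\<in>Z1. \<exists>b\<in>Z1. a \<noteq> b \<and> t a \<in> Z1 \<and> t b \<in> Z1"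
      using units gen_origin unit_ne_origin Z1(1) by (intro bexI[of _ origin] bexI[of _ "unit j"]) auto
  qed
  have gens_H: "gen ` {..<n} \<subseteq> H" by (blast intro: perm_gen.gen_base)
  obtain Z where "Z1 \<subseteq> Z" "Z \<subseteq> X" "double_transpositions Z \<subseteq> H"
    "\<forall>t\<in>gen ` {..<n}. t ` Z = Z"
    using double_transpositions_invariant_extension[OF finite_X gens_permute gens_H Z1(2,3) ov] by (elim exE conjE)
  then show ?thesis using Z1(1) by (intro exI[of _ Z]) auto
qed

lemma on_axis_0_eq: "x \<in> X \<Longrightarrow> on_axis 0 x \<Longrightarrow> x = origin(0 := x 0)"
  using cube_upd[OF origin_in] cube_coord n_ge_2
  by (intro cube_eqI) (auto simp: on_axis_def origin_def)

lemma special_0_eq: "x \<in> X \<Longrightarrow> special 0 x \<Longrightarrow> x = ones(0 := x 0)"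
  using cube_upd[OF ones_in] cube_coord n_ge_2
  by (intro cube_eqI) (auto simp: special_def ones_def)

context
  fixes Z assumes origin_Z: "origin \<in> Z" and gen_closed: "\<And>j z. j < n \<Longrightarrow> z \<in> Z \<Longrightarrow> gen j z \<in> Z"
    and Z_sub: "Z \<subseteq> X"
begin

lemma funpow_gen_closed: "j < n \<Longrightarrow> z \<in> Z \<Longrightarrow> (gen j ^^ k) z \<in> Z"
  by (induction k) (auto intro: gen_closed)

lemma reach_rho_line:
  assumes z: "z \<in> Z" and j: "j < n" and "\<not> on_axis j z" "\<not> special j z" and a: "a \<in> A"
  shows "z(j := a) \<in> Z"
proof -
  have zj: "z j \<in> A" using cube_coord j z Z_sub by blast
  define k where "k = num a + q - num (z j)"
  have "(num (z j) + k) mod q = num a"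
    using num_less[OF zj] num_less[OF a] unfolding k_def by simp
  then have "(gen j ^^ k) z = z(j := a)"
    using funpow_gen[OF j] z Z_sub assms(3,4) rho_funpow[OF zj] a by (auto simp: gen_rule_def)
  then show ?thesis using funpow_gen_closed[OF j z] by metis
qed

lemma reach_axis:
  assumes z: "z \<in> Z" and j: "j < n" and "on_axis j z" "z j \<noteq> aL" and a: "a \<in> A" "a \<noteq> aL"
  shows "z(j := a) \<in> Z"
proof -
  have zj: "z j \<in> A" using cube_coord j z Z_sub by blast
  have d: "num (z j) < q - 1" and t: "num a < q - 1"
    using num_less_aL zj a assms(4) by blast+
  define k where "k = num a + (q - 1) - num (z j)"
  have "num (z j) + k = num a + (q - 1)"
    using d unfolding k_def by simp
  then have "(num (z j) + k) mod (q - 1) = num a"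
    using t by (simp only: mod_add_self2 mod_less)
  then have "(kappa ^^ k) (z j) = a"
    using funpow_kappa[OF d, of k] zj a by simp
  then have "(gen j ^^ k) z = z(j := a)"
    using funpow_gen[OF j] z Z_sub assms(3) by (auto simp: gen_rule_def)
  then show ?thesis using funpow_gen_closed[OF j z] by metis
qed

lemma reach_special_line_0:
  assumes z: "z \<in> Z" and "special 0 z" "z 0 = a1" and a: "a \<in> A" "a \<noteq> a0"
  shows "z(0 := a) \<in> Z"
proof -
  have n: "0 < n" using n_ge_2 by simp
  have "num a \<noteq> 0" using a by (metis a0_def e_num)
  then have "num a - 1 \<le> q - 2" "num a - 1 + 1 = num a"
    using num_less[OF a(1)] by auto
  then have "(special_cycle 0 ^^ (num a - 1)) a1 = a"
    using funpow_special_cycle_0 a by simp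
  moreover have "\<not> on_axis 0 z" using not_on_axis_and_special assms(2) by blast
  ultimately have "(gen 0 ^^ (num a - 1)) z = z(0 := a)"
    using funpow_gen[OF n, of z] z Z_sub assms(2,3) by (auto simp: gen_rule_def)
  then show ?thesis using funpow_gen_closed[OF n z] by metis
qed

lemma reach_first_a1: "y \<in> X \<Longrightarrow> y 0 = a1 \<Longrightarrow> y \<in> Z"
proof (rule cube_fill_registers[where b = "unit 0" and m = 1])
  show "unit 0 \<in> Z" "unit 0 \<in> X"
    using gen_closed[OF _ origin_Z] gen_origin unit_in n_ge_2 by fastforce+
  fix z k a assume "z \<in> Z" "\<forall>i<1. z i = unit 0 i" "1 \<le> k" "k < n" "a \<in> A"
  moreover have "\<not> on_axis k z" "\<not> special k z"
    using calculation letters_distinct n_ge_2 unfolding on_axis_def special_def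
    by (auto simp: unit_def intro!: exI[of _ 0])
  ultimately show "z(k := a) \<in> Z" using reach_rho_line by blast
qed (auto simp: unit_def)

lemma reach_all_but_two:
  assumes x: "x \<in> X" and "x \<noteq> origin(0 := aL)" and "alt \<Longrightarrow> x \<noteq> ones(0 := a0)"
  shows "x \<in> Z"
proof -
  have n: "0 < n" using n_ge_2 by simp
  let ?y = "x(0 := a1)"
  have y: "?y \<in> Z" using reach_first_a1 cube_upd[OF x n] letters_in by simp
  have x0: "x 0 \<in> A" using cube_coord[OF x n] .
  consider "on_axis 0 x" | "special 0 x" | "\<not> on_axis 0 x" "\<not> special 0 x" by blast
  then have "?y(0 := x 0) \<in> Z"
  proof cases
    case 1
    then have "x 0 \<noteq> aL" using on_axis_0_eq[OF x] assms(2) by metis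
    then show ?thesis
      by (intro reach_axis[OF y n]) (use 1 x0 letters_distinct in auto)
  next
    case 2
    then have "x 0 \<noteq> a0" using special_0_eq[OF x] assms(3) special_def by metis
    then show ?thesis
      by (intro reach_special_line_0[OF y]) (use 2 x0 in auto)
  next
    case 3
    then show ?thesis
      by (intro reach_rho_line[OF y n]) (use 3 x0 in auto)
  qed
  then show ?thesis by simp
qed

text \<open>The two points missed above are reached by \<open>gen 1\<close>, which acts on the neighbours
  chosen below as \<open>rho\<close>, whatever the remaining registers are.\<close>
lemma reach_exceptions: "origin(0 := aL) \<in> Z" "ones(0 := a0) \<in> Z"
proof -
  have n: "0 < n" "1 < n" using n_ge_2 by auto
  let ?w = "origin(0 := aL, 1 := aL)"
  have w: "?w \<in> X" using cube_upd origin_in letters_in n by simp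
  have "?w 1 \<noteq> (origin(0 := aL)) 1" "?w 0 \<noteq> (ones(0 := a0)) 0"
    using letters_distinct n by (auto simp: origin_def)
  then have "?w \<in> Z" using reach_all_but_two[OF w] by metis
  moreover have "gen 1 ?w = origin(0 := aL)"
  proof -
    have "\<not> on_axis 1 ?w"
      using n letters_distinct unfolding on_axis_def by (metis fun_upd_same fun_upd_twist zero_neq_one)
    then have "gen_rule 1 ?w aL = a0"
      using special_cycle_aL rho_aL by (simp add: gen_rule_def)
    then show ?thesis
      using gen_apply[OF w] n by (simp add: fun_eq_iff origin_def)
  qed
  ultimately show "origin(0 := aL) \<in> Z" using gen_closed[OF n(2)] by metis
next
  have n: "0 < n" "1 < n" using n_ge_2 by auto
  let ?w = "ones(0 := a0, 1 := a0)"
  have w: "?w \<in> X" using cube_upd ones_in letters_in n by simp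
  have "?w 0 \<noteq> (origin(0 := aL)) 0" "?w 1 \<noteq> (ones(0 := a0)) 1"
    using letters_distinct n by (auto simp: ones_def)
  then have "?w \<in> Z" using reach_all_but_two[OF w] by metis
  moreover have "gen 1 ?w = ones(0 := a0)"
  proof -
    have "gen_rule 1 ?w a0 = a1"
      using kappa_a0 rho_a0 letters_distinct by (simp add: gen_rule_def special_def)
    then show ?thesis
      using gen_apply[OF w] n by (simp add: fun_eq_iff ones_def)
  qed
  ultimately show "ones(0 := a0) \<in> Z" using gen_closed[OF n(2)] by metis
qed

lemma cube_subset_gen_closed: "X \<subseteq> Z"
  using reach_all_but_two reach_exceptions by blast

end

lemma double_transpositions_cube: "double_transpositions X \<subseteq> H"
proof -
  obtain Z where "origin \<in> Z" "Z \<subseteq> X" "double_transpositions Z \<subseteq> H" "\<forall>j<n. gen j ` Z = Z"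
    using gen_invariant_extension by (elim exE conjE)
  moreover from this have "X \<subseteq> Z"
    by (intro cube_subset_gen_closed) blast+
  ultimately show ?thesis by (metis subset_antisym)
qed

definition axis_swap :: "nat \<Rightarrow> (nat \<Rightarrow> 'a) \<Rightarrow> nat \<Rightarrow> 'a" where
  "axis_swap j = transpose (origin(j := aP)) (origin(j := aL))"

definition special_swap :: "nat \<Rightarrow> (nat \<Rightarrow> 'a) \<Rightarrow> nat \<Rightarrow> 'a" where
  "special_swap j =
    (if j = 0 then if alt then transpose (ones(0 := aL)) (ones(0 := a0)) else id
     else transpose (ones(0 := aL, j := a0)) (ones(0 := aL, j := a1)))"

lemma axis_swap_eq_reg_update:
  "j < n \<Longrightarrow> axis_swap j = reg_update j (\<lambda>x. if on_axis j x then transpose aP aL else id)"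
  unfolding axis_swap_def
  by (subst transpose_eq_reg_update[OF origin_in _ letters_in(3,4)]) (simp_all add: on_axis_def origin_def)

lemma special_swap_eq_reg_update:
  assumes j: "j < n"
  shows "special_swap j = reg_update j (\<lambda>x. if special j x then special_transp j else id)"
proof (cases "j = 0")
  case True
  show ?thesis
  proof (cases alt)
    case False
    then have "special_swap j = id" "\<not> special j x" for x
      using True unfolding special_swap_def special_def by simp_all
    then show ?thesis by (simp add: reg_update_def fun_eq_iff)
  next
    case alt: True
    have "special_swap j = transpose (ones(0 := aL)) (ones(0 := a0))"
      using alt True unfolding special_swap_def by simp
    also have "\<dots> = reg_update 0 (\<lambda>x. if \<forall>k<n. k \<noteq> 0 \<longrightarrow> x k = ones k then transpose aL a0 else id)"
      using True j by (intro transpose_eq_reg_update[OF ones_in _ letters_in(4,1)]) simp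
    also have "\<dots> = reg_update j (\<lambda>x. if special j x then special_transp j else id)"
      using alt True unfolding special_def special_transp_def ones_def by simp
    finally show ?thesis .
  qed
next
  case False
  have u: "ones(0 := aL) \<in> X" using cube_upd[OF ones_in] letters_in j by simp
  have "special_swap j = transpose (ones(0 := aL, j := a0)) (ones(0 := aL, j := a1))"
    using False by (simp add: special_swap_def)
  also have "\<dots> = reg_update j
      (\<lambda>x. if \<forall>k<n. k \<noteq> j \<longrightarrow> x k = (ones(0 := aL)) k then transpose a0 a1 else id)"
    by (rule transpose_eq_reg_update[OF u j letters_in(1,2)])
  also have "\<dots> = reg_update j (\<lambda>x. if special j x then special_transp j else id)"
  proof -
    have "(\<forall>k<n. k \<noteq> j \<longrightarrow> x k = (ones(0 := aL)) k) \<longleftrightarrow> special j x" for x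
      using False j unfolding special_def ones_def by auto
    moreover have "special_transp j = transpose a0 a1"
      using False by (simp add: special_transp_def)
    ultimately show ?thesis by presburger
  qed
  finally show ?thesis .
qed

lemma gen_decomp:
  assumes j: "j < n" shows "gen j = rotate_reg j \<circ> axis_swap j \<circ> special_swap j"
proof -
  define ax where "ax x = (if on_axis j x then transpose aP aL else id)" for x
  define sp where "sp x = (if special j x then special_transp j else id)" for x
  have rules: "update_rule j sp" "update_rule j (\<lambda>x. ax x \<circ> sp x)"
    unfolding update_rule_def ax_def sp_def
    using special_transp_permutes letters_in by (auto simp: permutes_swap_id permutes_compose)
  have "rotate_reg j \<circ> axis_swap j \<circ> special_swap j = reg_update j (\<lambda>_. rho) \<circ> (reg_update j ax \<circ> reg_update j sp)"
    unfolding rotate_reg_def axis_swap_eq_reg_update[OF j] special_swap_eq_reg_update[OF j] ax_def sp_def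
    by (simp add: o_assoc)
  also have "\<dots> = reg_update j (\<lambda>x. rho \<circ> (ax x \<circ> sp x))"
    using reg_update_comp[OF rules(1) j] reg_update_comp[OF rules(2) j] by (simp add: ax_def)
  also have "\<dots> = gen j"
    unfolding gen_def gen_rule_def ax_def sp_def kappa_def special_cycle_def
    using not_on_axis_and_special by (intro reg_update_cong) auto
  finally show ?thesis ..
qed

lemma evenperm_gen:
  assumes j: "j < n" shows "evenperm (gen j) \<longleftrightarrow> alt \<or> j \<noteq> 0"
proof -
  have swaps: "\<not> evenperm (axis_swap j)" "evenperm (special_swap j) \<longleftrightarrow> \<not> alt \<and> j = 0"
    using letters_distinct fun_upd_eqD[of "origin" j aP "origin" aL]
    unfolding axis_swap_def special_swap_def
    by (auto simp: evenperm_swap dest: fun_upd_eqD)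
  have "permutation (rotate_reg j)" "permutation (axis_swap j)" "permutation (special_swap j)"
    using rotate_reg_permutes[OF j] finite_X permutation_permutes
    by (auto simp: axis_swap_def special_swap_def permutation_swap_id)
  then show ?thesis
    using swaps evenperm_rotate_reg[OF j] gen_decomp[OF j]
    by (simp add: evenperm_comp permutation_compose)
qed

end

section \<open>Generators for the binary alphabet\<close>

text \<open>In the plane of
  registers \<open>0\<close> and \<open>1\<close> the frozen lines make \<open>gen 0 \<circ> gen 1\<close> a 3-cycle; off that plane
  both generators flip, so there \<open>(gen 0 \<circ> gen 1)\<^sup>2\<close> is the identity.\<close>
locale gens_q_2 = enum_cube +
  assumes q_eq_2: "q = 2" and n_ge_3: "3 \<le> n"
begin

lemma A_cases:
  assumes "a \<in> A" shows "a = a0 \<or> a = a1"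
proof -
  have "num a = 0 \<or> num a = 1" using num_less[OF assms] q_eq_2 by auto
  then show ?thesis using e_num[OF assms] unfolding a0_def a1_def by auto
qed

lemma rho_a1: "rho a1 = a0"
  unfolding a0_def a1_def using rho_e[of 1] q_eq_2 by simp

lemma rho_rho: "a \<in> A \<Longrightarrow> rho (rho a) = a"
  using A_cases[of a] rho_a0 rho_a1 by auto

lemma rho_in: "a \<in> A \<Longrightarrow> rho a \<in> A"
  using permutes_in_image[OF rho_permutes] by simp

definition in_plane :: "(nat \<Rightarrow> 'a) \<Rightarrow> bool" where
  "in_plane x \<longleftrightarrow> (\<forall>k<n. 2 \<le> k \<longrightarrow> x k = a0)"

definition frozen :: "nat \<Rightarrow> (nat \<Rightarrow> 'a) \<Rightarrow> bool" where
  "frozen j x \<longleftrightarrow>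
    (if j = 0 then x 1 = a1 \<and> in_plane x
     else if j = 1 then x 0 = a1 \<and> in_plane x
     else \<forall>k<n. k \<noteq> 0 \<and> k \<noteq> j \<longrightarrow> x k = a0)"

definition gen_rule :: "nat \<Rightarrow> (nat \<Rightarrow> 'a) \<Rightarrow> 'a \<Rightarrow> 'a" where
  "gen_rule j x = (if frozen j x then id else rho)"

definition gen :: "nat \<Rightarrow> (nat \<Rightarrow> 'a) \<Rightarrow> nat \<Rightarrow> 'a" where
  "gen j = reg_update j (gen_rule j)"

lemma in_plane_upd [simp]: "j < 2 \<Longrightarrow> in_plane (x(j := a)) = in_plane x"
  unfolding in_plane_def by auto

lemma frozen_upd [simp]: "frozen j (x(j := a)) = frozen j x"
  unfolding frozen_def in_plane_def by auto

lemma update_rule_gen: "update_rule j (gen_rule j)"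
  unfolding update_rule_def gen_rule_def using rho_permutes by simp

lemma gen_permutes: "j < n \<Longrightarrow> gen j permutes X"
  unfolding gen_def by (rule reg_update_permutes[OF update_rule_gen])

lemma gen_instruction: "j < n \<Longrightarrow> instruction A n (gen j)"
  unfolding gen_def by (rule reg_update_instruction[OF update_rule_gen])

lemma gen_apply: "x \<in> X \<Longrightarrow> gen j x = x(j := gen_rule j x (x j))"
  by (simp add: gen_def reg_update_apply)

definition plane_pt :: "'a \<Rightarrow> 'a \<Rightarrow> nat \<Rightarrow> 'a" where "plane_pt a b = origin(0 := a, 1 := b)"

lemma plane_pt_in: "a \<in> A \<Longrightarrow> b \<in> A \<Longrightarrow> plane_pt a b \<in> X"
  unfolding plane_pt_def using cube_upd origin_in n_ge_3 by simp

lemma plane_pt_eq_iff: "plane_pt a b = plane_pt a' b' \<longleftrightarrow> a = a' \<and> b = b'"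
  unfolding plane_pt_def by (metis fun_upd_same fun_upd_twist zero_neq_one)

lemma in_plane_plane_pt: "in_plane (plane_pt a b)"
  unfolding in_plane_def plane_pt_def origin_def by simp

lemma in_plane_eq_plane_pt: "x \<in> X \<Longrightarrow> in_plane x \<Longrightarrow> x = plane_pt (x 0) (x 1)"
  using n_ge_3 cube_coord plane_pt_in
  by (intro cube_eqI) (auto simp: in_plane_def plane_pt_def origin_def)

lemma origin_units_plane_pt: "origin = plane_pt a0 a0" "unit 0 = plane_pt a1 a0" "unit 1 = plane_pt a0 a1"
  unfolding plane_pt_def unit_def using n_ge_3 by (auto simp: origin_def fun_eq_iff)

lemma gen_plane_pt:
  assumes "a \<in> A" "b \<in> A"
  shows "gen 0 (plane_pt a b) = (if b = a1 then plane_pt a b else plane_pt (rho a) b)"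
    and "gen 1 (plane_pt a b) = (if a = a1 then plane_pt a b else plane_pt a (rho b))"
  using gen_apply[OF plane_pt_in[OF assms]] in_plane_plane_pt
  by (auto simp: gen_rule_def frozen_def plane_pt_def fun_upd_twist)

lemma gen_off_plane:
  "x \<in> X \<Longrightarrow> \<not> in_plane x \<Longrightarrow> j < 2 \<Longrightarrow> gen j x = x(j := rho (x j))"
  using gen_apply by (auto simp: gen_rule_def frozen_def)

lemma gen_0_1_squared:
  "(gen 0 \<circ> gen 1) \<circ> (gen 0 \<circ> gen 1) = transpose origin (unit 1) \<circ> transpose origin (unit 0)"
proof
  fix x
  have n: "0 < n" "1 < n" using n_ge_3 by auto
  have pts: "origin \<in> X" "unit 0 \<in> X" "unit 1 \<in> X" using origin_in unit_in n by auto
  show "((gen 0 \<circ> gen 1) \<circ> (gen 0 \<circ> gen 1)) x = (transpose origin (unit 1) \<circ> transpose origin (unit 0)) x"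
  proof (cases "x \<in> X \<and> in_plane x")
    case True
    then have "x = plane_pt (x 0) (x 1)" "x 0 = a0 \<or> x 0 = a1" "x 1 = a0 \<or> x 1 = a1"
      using in_plane_eq_plane_pt A_cases cube_coord n by auto
    then show ?thesis
      using a0_ne_a1 a0_ne_a1[symmetric]
      by (elim disjE) (simp_all add: gen_plane_pt[simplified] a0_in a1_in rho_a0 rho_a1
          origin_units_plane_pt[simplified] plane_pt_eq_iff transpose_def)
  next
    case False
    then have "x \<noteq> origin" "x \<noteq> unit 0" "x \<noteq> unit 1"
      using pts in_plane_plane_pt origin_units_plane_pt by metis+
    moreover have "((gen 0 \<circ> gen 1) \<circ> (gen 0 \<circ> gen 1)) x = x"
    proof (cases "x \<in> X")
      case True
      then show ?thesis
        using False gen_off_plane cube_upd cube_coord rho_in rho_rho n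
        by (simp add: fun_upd_twist)
    qed (simp add: gen_def reg_update_outside)
    ultimately show ?thesis by simp
  qed
qed

abbreviation H where "H \<equiv> perm_gen (gen ` {..<n})"

lemma gens_permute: "\<forall>s\<in>gen ` {..<n}. s permutes X"
  using gen_permutes by blast

lemma gen_origin_units:
  "gen 0 origin = unit 0" "gen 0 (unit 0) = origin" "gen 1 origin = unit 1" "gen 1 (unit 1) = origin"
  "2 \<le> j \<Longrightarrow> gen j origin = origin" "2 \<le> j \<Longrightarrow> gen j (unit 0) = unit 0"
proof -
  show "gen 0 origin = unit 0" "gen 0 (unit 0) = origin" "gen 1 origin = unit 1" "gen 1 (unit 1) = origin"
    using gen_plane_pt[simplified] a0_in a1_in rho_a0 rho_a1 a0_ne_a1
    by (simp_all add: origin_units_plane_pt[simplified])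
  assume "2 \<le> j"
  then have "frozen j origin" "frozen j (unit 0)"
    unfolding frozen_def unit_def origin_def by auto
  then show "gen j origin = origin" "gen j (unit 0) = unit 0"
    using gen_apply origin_in unit_in n_ge_3 by (simp_all add: gen_rule_def)
qed

lemma double_transpositions_origin_units: "double_transpositions {origin, unit 0, unit 1} \<subseteq> H"
proof (rule double_transpositions_triple)
  have "(gen 0 \<circ> gen 1) \<circ> (gen 0 \<circ> gen 1) \<in> H"
    using n_ge_3 by (intro perm_gen.gen_comp perm_gen.gen_base) auto
  then show "transpose origin (unit 1) \<circ> transpose origin (unit 0) \<in> H"
    by (simp only: gen_0_1_squared)
  show "origin \<noteq> unit 0" "origin \<noteq> unit 1" "unit 0 \<noteq> unit 1"
    using origin_units_plane_pt plane_pt_eq_iff a0_ne_a1 by metis+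
qed

lemma gen_invariant_extension:
  "\<exists>Z. origin \<in> Z \<and> Z \<subseteq> X \<and> double_transpositions Z \<subseteq> H \<and> (\<forall>j<n. gen j ` Z = Z)"
proof -
  let ?Y = "{origin, unit 0, unit 1}"
  have n: "0 < n" "1 < n" using n_ge_3 by auto
  have ne: "origin \<noteq> unit 0" "origin \<noteq> unit 1"
    using unit_ne_origin n by metis+
  have ov: "\<forall>t\<in>gen ` {..<n}. \<exists>a\<in>?Y. \<exists>b\<in>?Y. a \<noteq> b \<and> t a \<in> ?Y \<and> t b \<in> ?Y"
  proof
    fix t assume "t \<in> gen ` {..<n}"
    then obtain j where "j < n" "t = gen j" by blast
    then consider "t = gen 0" | "t = gen 1" | "2 \<le> j" "t = gen j"
      by (metis One_nat_def less_2_cases not_le)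
    then show "\<exists>a\<in>?Y. \<exists>b\<in>?Y. a \<noteq> b \<and> t a \<in> ?Y \<and> t b \<in> ?Y"
    proof cases
      case 1
      then show ?thesis using gen_origin_units(1,2) ne by (intro bexI[of _ origin] bexI[of _ "unit 0"]) auto
    next
      case 2
      then show ?thesis using gen_origin_units(3,4) ne by (intro bexI[of _ origin] bexI[of _ "unit 1"]) auto
    next
      case 3
      then show ?thesis using gen_origin_units(5,6) ne by (intro bexI[of _ origin] bexI[of _ "unit 0"]) auto
    qed
  qed
  have sub: "gen ` {..<n} \<subseteq> H" "?Y \<subseteq> X"
    using origin_in unit_in[OF n(1)] unit_in[OF n(2)] by (blast intro: perm_gen.gen_base)+
  obtain Z where "?Y \<subseteq> Z" "Z \<subseteq> X" "double_transpositions Z \<subseteq> H" "\<forall>t\<in>gen ` {..<n}. t ` Z = Z"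
    using double_transpositions_invariant_extension[OF finite_X gens_permute sub
        double_transpositions_origin_units ov] by (elim exE conjE)
  then show ?thesis by (intro exI[of _ Z]) simp
qed

context
  fixes Z assumes origin_Z: "origin \<in> Z" and gen_closed: "\<And>j z. j < n \<Longrightarrow> z \<in> Z \<Longrightarrow> gen j z \<in> Z"
    and Z_sub: "Z \<subseteq> X"
begin

lemma reach_unfrozen:
  assumes z: "z \<in> Z" and j: "j < n" and "\<not> frozen j z" and a: "a \<in> A"
  shows "z(j := a) \<in> Z"
proof -
  have zj: "z j \<in> A" using cube_coord j z Z_sub by blast
  have flip: "gen j z = z(j := rho (z j))"
    using gen_apply z Z_sub assms(3) by (auto simp: gen_rule_def)
  have "a = z j \<or> a = rho (z j)"
    using A_cases[OF a] A_cases[OF zj] rho_a0 rho_a1 by auto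
  then show ?thesis
  proof
    assume "a = z j" then show ?thesis using z by simp
  next
    assume "a = rho (z j)" then show ?thesis using gen_closed[OF j z] flip by simp
  qed
qed

lemma reach_a0_a1_first:
  assumes y: "y \<in> X" "y 0 = a0" "y 1 = a1" shows "y \<in> Z"
proof (rule cube_fill_registers[where b = "unit 1" and m = 2])
  have n: "0 < n" "1 < n" using n_ge_3 by auto
  show "unit 1 \<in> Z" "unit 1 \<in> X"
    using gen_closed[OF n(2) origin_Z] gen_origin_units(3) unit_in[OF n(2)] by simp_all
  show "y \<in> X" by (rule y(1))
  show "\<forall>i<2. y i = unit 1 i"
    using y n by (auto simp: unit_def origin_def less_2_cases_iff)
  fix z k a assume z: "z \<in> Z" "\<forall>i<2. z i = unit 1 i" "2 \<le> k" "k < n" "a \<in> A"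
  then have "z 1 = a1" by (simp add: unit_def)
  then have "\<not> frozen k z"
    using z(3,4) a0_ne_a1 n unfolding frozen_def by (auto intro!: exI[of _ 1])
  then show "z(k := a) \<in> Z" using reach_unfrozen z by blast
qed

lemma reach_off_plane:
  assumes x: "x \<in> X" and off: "\<not> in_plane x"
  shows "x \<in> Z"
proof -
  have n: "0 < n" "1 < n" using n_ge_3 by auto
  let ?y = "x(0 := a0, 1 := a1)"
  have "?y \<in> Z"
    using reach_a0_a1_first cube_upd x a0_in a1_in n by simp
  then have "?y(1 := x 1) \<in> Z"
    by (rule reach_unfrozen[OF _ n(2) _ cube_coord[OF x n(2)]]) (use off in \<open>simp add: frozen_def\<close>)
  then have "?y(1 := x 1, 0 := x 0) \<in> Z"
    by (rule reach_unfrozen[OF _ n(1) _ cube_coord[OF x n(1)]]) (use off in \<open>simp add: frozen_def\<close>)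
  then show ?thesis by simp
qed

lemma cube_subset_gen_closed: "X \<subseteq> Z"
proof
  have n: "0 < n" "1 < n" "2 < n" using n_ge_3 by auto
  have "plane_pt a1 a1 \<in> Z"
  proof -
    let ?w = "(plane_pt a1 a1)(2 := a1)"
    have w: "?w \<in> X" "\<not> in_plane ?w"
      using cube_upd[OF plane_pt_in] a1_in a0_ne_a1 n unfolding in_plane_def by auto
    then have "?w \<in> Z" by (rule reach_off_plane)
    moreover have "\<not> frozen 2 ?w"
      using a0_ne_a1 n unfolding frozen_def plane_pt_def by auto
    ultimately have "?w(2 := a0) \<in> Z" using reach_unfrozen n a0_in by blast
    moreover have "?w(2 := a0) = plane_pt a1 a1"
      unfolding plane_pt_def origin_def using n by (auto simp: fun_eq_iff)
    ultimately show ?thesis by simp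
  qed
  moreover have "plane_pt a0 a0 \<in> Z" "plane_pt a1 a0 \<in> Z" "plane_pt a0 a1 \<in> Z"
    using origin_Z gen_closed[OF n(1) origin_Z] gen_closed[OF n(2) origin_Z] gen_origin_units
    by (simp_all add: origin_units_plane_pt[symmetric])
  moreover fix x assume x: "x \<in> X"
  ultimately show "x \<in> Z"
    using reach_off_plane in_plane_eq_plane_pt A_cases cube_coord n by metis
qed

end

lemma double_transpositions_cube: "double_transpositions X \<subseteq> H"
proof -
  obtain Z where "origin \<in> Z" "Z \<subseteq> X" "double_transpositions Z \<subseteq> H" "\<forall>j<n. gen j ` Z = Z"
    using gen_invariant_extension by (elim exE conjE)
  moreover from this have "X \<subseteq> Z"
    by (intro cube_subset_gen_closed) blast+
  ultimately show ?thesis by (metis subset_antisym)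
qed

lemma frozen_0_iff: "frozen 0 x \<longleftrightarrow> (\<forall>k<n. k \<noteq> 0 \<longrightarrow> x k = unit 1 k)"
proof -
  have unit_1: "k < n \<Longrightarrow> unit 1 k = (if k = 1 then a1 else a0)" for k
    by (simp add: unit_def origin_def)
  show ?thesis
  proof
    assume "frozen 0 x"
    then have "x 1 = a1" "\<forall>k<n. 2 \<le> k \<longrightarrow> x k = a0" unfolding frozen_def in_plane_def by auto
    show "\<forall>k<n. k \<noteq> 0 \<longrightarrow> x k = unit 1 k"
    proof (intro allI impI)
      fix k assume "k < n" "k \<noteq> 0"
      then show "x k = unit 1 k"
        using \<open>x 1 = a1\<close> \<open>\<forall>k<n. 2 \<le> k \<longrightarrow> x k = a0\<close> unit_1 by (cases "k = 1") auto
    qed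
  next
    assume "\<forall>k<n. k \<noteq> 0 \<longrightarrow> x k = unit 1 k"
    then show "frozen 0 x" using unit_1 n_ge_3 unfolding frozen_def in_plane_def by auto
  qed
qed

text \<open>On the frozen line of \<open>gen 0\<close> the rotation of register \<open>0\<close> is undone by one transposition.\<close>
lemma gen_0_eq_rotate_reg_transpose: "gen 0 = rotate_reg 0 \<circ> transpose (unit 1) ((unit 1)(0 := a1))"
proof -
  have n: "0 < n" "1 < n" using n_ge_3 by auto
  define sw where "sw x = (if frozen 0 x then transpose a0 a1 else id)" for x
  have rule: "update_rule 0 sw"
    unfolding update_rule_def sw_def using a0_in a1_in by (simp add: permutes_swap_id)
  have "transpose ((unit 1)(0 := a0)) ((unit 1)(0 := a1)) = reg_update 0 sw"
    unfolding sw_def frozen_0_iff by (rule transpose_eq_reg_update[OF unit_in[OF n(2)] n(1) a0_in a1_in])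
  moreover have "(unit 1)(0 := a0) = unit 1"
    using n by (simp add: unit_def origin_def fun_eq_iff)
  moreover have "rotate_reg 0 \<circ> reg_update 0 sw = reg_update 0 (\<lambda>x. rho \<circ> sw x)"
    unfolding rotate_reg_def using rule n by (intro reg_update_comp) auto
  moreover have "\<dots> = gen 0"
    unfolding gen_def using A_cases cube_coord n rho_a0 rho_a1 a0_ne_a1
    by (intro reg_update_cong) (fastforce simp: sw_def gen_rule_def)
  ultimately show ?thesis by simp
qed

lemma odd_gen_0: "\<not> evenperm (gen 0)"
proof -
  have n: "0 < n" "1 < n" using n_ge_3 by auto
  have "unit 1 \<noteq> (unit 1)(0 := a1)"
  proof
    assume "unit 1 = (unit 1)(0 := a1)"
    then have "unit 1 0 = a1" by (metis fun_upd_same)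
    then show False using a0_ne_a1 n by (simp add: unit_def origin_def)
  qed
  then show ?thesis
    using gen_0_eq_rotate_reg_transpose evenperm_rotate_reg[OF n(1)] rotate_reg_permutes[OF n(1)] finite_X
    by (metis evenperm_comp evenperm_swap permutation_permutes permutation_swap_id)
qed

end

section \<open>Generation of \<open>Sym(A\<^sup>n)\<close> and \<open>Alt(A\<^sup>n)\<close>\<close>

lemma ex_enumeration: "finite A \<Longrightarrow> \<exists>e. bij_betw e {..<card A} A"
  using ex_bij_betw_nat_finite by (metis atLeast0LessThan)

lemma Sym_generated_by_instructions:
  assumes "finite A" "2 \<le> card A" "2 \<le> n" "\<not> (card A = 2 \<and> n = 2)"
  shows "\<exists>g. (\<forall>i<n. instruction A n (g i)) \<and> perm_gen (g ` {..<n}) = Sym_set A n"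
proof -
  obtain e where e: "bij_betw e {..<card A} A" using ex_enumeration[OF assms(1)] ..
  have n: "0 < n" using assms(3) by simp
  consider "card A = 2" "3 \<le> n" | "3 \<le> card A" using assms(2-4) by linarith
  then show ?thesis
  proof cases
    case 1
    interpret gens_q_2 A n "card A" e by unfold_locales (use e assms 1 in auto)
    have "perm_gen (gen ` {..<n}) = Sym_set A n"
      unfolding Sym_set_def
      using perm_gen_eq_permutations[OF finite_X gens_permute double_transpositions_cube _ odd_gen_0
          origin_in unit_in[OF n] unit_ne_origin[OF n, symmetric]] n
      by (blast intro: perm_gen.gen_base)
    then show ?thesis using gen_instruction by blast
  next
    case 2
    interpret gens_q_ge_3 A n "card A" e False by unfold_locales (use e assms 2 in auto)
    have "perm_gen (gen ` {..<n}) = Sym_set A n"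
      unfolding Sym_set_def
      using perm_gen_eq_permutations[OF finite_X gens_permute double_transpositions_cube _ _
          origin_in unit_in[OF n] unit_ne_origin[OF n, symmetric]] evenperm_gen[OF n] n
      by (blast intro: perm_gen.gen_base)
    then show ?thesis using gen_instruction by blast
  qed
qed

lemma Alt_generated_by_instructions:
  assumes "finite A" "3 \<le> card A" "2 \<le> n"
  shows "\<exists>g. (\<forall>i<n. instruction A n (g i) \<and> evenperm (g i)) \<and> perm_gen (g ` {..<n}) = Alt_set A n"
proof -
  obtain e where e: "bij_betw e {..<card A} A" using ex_enumeration[OF assms(1)] ..
  interpret gens_q_ge_3 A n "card A" e True by unfold_locales (use e assms in auto)
  have n: "0 < n" using assms(3) by simp
  have "perm_gen (gen ` {..<n}) = Alt_set A n"
    unfolding Alt_set_def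
    using perm_gen_eq_even_permutations[OF finite_X _ double_transpositions_cube
        origin_in unit_in[OF n] unit_ne_origin[OF n, symmetric]] gen_permutes evenperm_gen
    by blast
  then show ?thesis using gen_instruction evenperm_gen by blast
qed

theorem theorem1:
  fixes A :: "'a set" and n :: nat
  assumes "finite A" and "card A \<ge> 2" and "n \<ge> 2"
  shows "(\<not> (card A = 2 \<and> n = 2) \<longrightarrow>
           (\<exists>g :: nat \<Rightarrow> ((nat \<Rightarrow> 'a) \<Rightarrow> (nat \<Rightarrow> 'a)).
              (\<forall>i<n. instruction A n (g i)) \<and> perm_gen (g ` {..<n}) = Sym_set A n))
       \<and> (card A \<ge> 3 \<longrightarrow>
           (\<exists>g :: nat \<Rightarrow> ((nat \<Rightarrow> 'a) \<Rightarrow> (nat \<Rightarrow> 'a)).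
              (\<forall>i<n. instruction A n (g i) \<and> evenperm (g i)) \<and>
              perm_gen (g ` {..<n}) = Alt_set A n))"
  using Sym_generated_by_instructions[OF assms] Alt_generated_by_instructions[OF assms(1) _ assms(3)]
  by blast

end
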